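(* Let $R$ be a ring and $K\subseteq R$ a subring (containing $1$) which is a (not necessarily commutative) field, and suppose that the projective line $\mathbb{P}(R)$ is disconnected. Then the generalized chain geometry $\Sigma(K,R)$ admits an automorphism which is not induced by any semilinear bijection of $R^2$.
   Context: $R$ is an associative ring with unit element $1$; $\mathrm{GL}_2(R)$ is the group of invertible $2\times2$ matrices over $R$. A pair $(a,b)\in R^2$ is admissible if it is the first row of some matrix in $\mathrm{GL}_2(R)$. The projective line $\mathbb{P}(R)$ is the set of all cyclic submodules $R(a,b)$ of the left $R$-module $R^2$ with $(a,b)$ admissible; $\mathrm{GL}_2(R)$ acts on it by $R(a,b)\mapsto R((a,b)G)$. Two points $R(a,b)$, $R(c,d)$ are distant iff $\begin{pmatrix}a&b\\c&d\end{pmatrix}\in\mathrm{GL}_2(R)$; $\mathbb{P}(R)$ is disconnected if the graph on $\mathbb{P}(R)$ whose edges are the pairs of distant points has more than one connected component. For a subfield $K$ of $R$, the standard $K$-chain is $\{R(k,l):(k,l)\in K^2\setminus\{(0,0)\}\}\subseteq\mathbb{P}(R)$, and the $K$-chains are its images under $\mathrm{GL}_2(R)$; $\Sigma(K,R)$ is the incidence structure (point set $\mathbb{P}(R)$, blocks the $K$-chains), and an automorphism of it is a bijection of $\mathbb{P}(R)$ which maps the set of $K$-chains onto itself. A semilinear bijection of $R^2$ is a bijective additive map $f:R^2\to R^2$ for which there is a ring automorphism $\zeta$ of $R$ with $f(rv)=r^\zeta f(v)$ for all $r\in R$, $v\in R^2$; a bijection $\gamma$ of $\mathbb{P}(R)$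 is induced by $f$ if $p^\gamma=f(p)$ for all $p\in\mathbb{P}(R)$. *)

theory Defs
  imports Main
begin

text \<open>Elements of R^2 are pairs (row vectors); a 2x2 matrix (a,b,c,d) has rows (a,b) and (c,d).\<close>

type_synonym 'a mat2 = "'a \<times> 'a \<times> 'a \<times> 'a"

definition mmult2 :: "'a::ring_1 mat2 \<Rightarrow> 'a mat2 \<Rightarrow> 'a mat2" where
  "mmult2 M N = (case M of (a,b,c,d) \<Rightarrow> case N of (e,f,g,h) \<Rightarrow>
     (a*e + b*g, a*f + b*h, c*e + d*g, c*f + d*h))"

definition id2 :: "'a::ring_1 mat2" where
  "id2 = (1,0,0,1)"

definition GL2 :: "'a::ring_1 mat2 set" where
  "GL2 = {M. \<exists>N. mmult2 M N = id2 \<and> mmult2 N M = id2}"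

definition vmult :: "'a::ring_1 \<times> 'a \<Rightarrow> 'a mat2 \<Rightarrow> 'a \<times> 'a" where
  "vmult v G = (case v of (x,y) \<Rightarrow> case G of (a,b,c,d) \<Rightarrow> (x*a + y*c, x*b + y*d))"

definition smult2 :: "'a::ring_1 \<Rightarrow> 'a \<times> 'a \<Rightarrow> 'a \<times> 'a" where
  "smult2 r v = (r * fst v, r * snd v)"

definition vadd :: "'a::ring_1 \<times> 'a \<Rightarrow> 'a \<times> 'a \<Rightarrow> 'a \<times> 'a" where
  "vadd v w = (fst v + fst w, snd v + snd w)"

definition admissible :: "'a::ring_1 \<times> 'a \<Rightarrow> bool" where
  "admissible p = (\<exists>c d. (fst p, snd p, c, d) \<in> GL2)"

definition cyc :: "'a::ring_1 \<times> 'a \<Rightarrow> ('a \<times> 'a) set" where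
  "cyc p = {smult2 r p | r. True}"

definition projline :: "('a::ring_1 \<times> 'a) set set" where
  "projline = {cyc p | p. admissible p}"

definition distant :: "('a::ring_1 \<times> 'a) set \<Rightarrow> ('a \<times> 'a) set \<Rightarrow> bool" where
  "distant P Q = (\<exists>a b c d. P = cyc (a,b) \<and> Q = cyc (c,d) \<and> (a,b,c,d) \<in> GL2)"

definition disconnected :: "'a::ring_1 itself \<Rightarrow> bool" where
  "disconnected _ = (\<exists>P\<in>(projline :: ('a \<times> 'a) set set). \<exists>Q\<in>projline.
      \<not> (\<lambda>X Y. X \<in> projline \<and> Y \<in> projline \<and> distant X Y)\<^sup>*\<^sup>* P Q)"

definition subfield :: "'a::ring_1 set \<Rightarrow> bool" where
  "subfield K = (0 \<in> K \<and> 1 \<in> K \<and> (0::'a) \<noteq> 1 \<and>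
     (\<forall>x\<in>K. \<forall>y\<in>K. x + y \<in> K \<and> x - y \<in> K \<and> x * y \<in> K) \<and>
     (\<forall>x\<in>K. x \<noteq> 0 \<longrightarrow> (\<exists>y\<in>K. x * y = 1 \<and> y * x = 1)))"

text \<open>action of G on a point (as a set): p \<mapsto> image of p under v \<mapsto> vG, which equals R((a,b)G)\<close>
definition pact :: "('a::ring_1 \<times> 'a) set \<Rightarrow> 'a mat2 \<Rightarrow> ('a \<times> 'a) set" where
  "pact P G = (\<lambda>v. vmult v G) ` P"

definition std_chain :: "'a::ring_1 set \<Rightarrow> ('a \<times> 'a) set set" where
  "std_chain K = {cyc (k,l) | k l. k \<in> K \<and> l \<in> K \<and> (k,l) \<noteq> (0,0)}"

definition chains :: "'a::ring_1 set \<Rightarrow> ('a \<times> 'a) set set set" where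
  "chains K = {(\<lambda>P. pact P G) ` std_chain K | G. G \<in> GL2}"

definition chain_automorphism :: "'a::ring_1 set \<Rightarrow> (('a \<times> 'a) set \<Rightarrow> ('a \<times> 'a) set) \<Rightarrow> bool" where
  "chain_automorphism K \<gamma> = (bij_betw \<gamma> projline projline \<and> (\<lambda>C. \<gamma> ` C) ` chains K = chains K)"

definition ring_automorphism :: "('a::ring_1 \<Rightarrow> 'a) \<Rightarrow> bool" where
  "ring_automorphism z = (bij z \<and> (\<forall>x y. z (x + y) = z x + z y) \<and>
     (\<forall>x y. z (x * y) = z x * z y) \<and> z 1 = 1)"

definition semilinear_bij :: "('a::ring_1 \<times> 'a \<Rightarrow> 'a \<times> 'a) \<Rightarrow> bool" where
  "semilinear_bij f = (bij f \<and> (\<forall>v w. f (vadd v w) = vadd (f v) (f w)) \<and>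
     (\<exists>z. ring_automorphism z \<and> (\<forall>r v. f (smult2 r v) = smult2 (z r) (f v))))"

definition induced_by :: "(('a::ring_1 \<times> 'a) set \<Rightarrow> ('a \<times> 'a) set) \<Rightarrow> ('a \<times> 'a \<Rightarrow> 'a \<times> 'a) \<Rightarrow> bool" where
  "induced_by \<gamma> f = (\<forall>P\<in>projline. \<gamma> P = f ` P)"

end

theory Submission
  imports Defs
begin

text \<open>Pick a point p outside the connected component of R(1,0) and an involution G in
GL2(R) which maps p to a point distant from p; G preserves the component of p, and since
every K-chain is connected (it is the image of the standard chain, which is connected),
applying G on that component and the identity elsewhere permutes the K-chains.  A
semilinear bijection fixing R(1,0), R(0,1) and every R(1,x) is left multiplication by a unit, so it fixes
every point, whereas this automorphism moves p.\<close>

lemma mmult2_assoc: "mmult2 (mmult2 A B) C = mmult2 A (mmult2 B (C::'a::ring_1 mat2))"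
  by (cases A rule: prod_cases4; cases B rule: prod_cases4; cases C rule: prod_cases4)
     (simp add: mmult2_def distrib_left distrib_right mult.assoc add.assoc)

lemma mmult2_id2 [simp]: "mmult2 id2 A = A" "mmult2 A id2 = (A::'a::ring_1 mat2)"
  by (cases A rule: prod_cases4; simp add: mmult2_def id2_def)+

lemma vmult_mmult2: "vmult (vmult v A) B = vmult v (mmult2 A (B::'a::ring_1 mat2))"
  by (cases v; cases A rule: prod_cases4; cases B rule: prod_cases4)
     (simp add: mmult2_def vmult_def distrib_left distrib_right mult.assoc add.assoc)

lemma vmult_id2 [simp]: "vmult v (id2::'a::ring_1 mat2) = v"
  by (cases v) (simp add: vmult_def id2_def)

lemma vmult_smult2: "vmult (smult2 r v) G = smult2 r (vmult v (G::'a::ring_1 mat2))"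
  by (cases v; cases G rule: prod_cases4) (simp add: smult2_def vmult_def distrib_left mult.assoc)

lemma mmult2_rows: "mmult2 (a,b,c,d) G = (fst (vmult (a,b) G), snd (vmult (a,b) G),
   fst (vmult (c,d) G), snd (vmult (c,d) (G::'a::ring_1 mat2)))"
  by (cases G rule: prod_cases4) (simp add: mmult2_def vmult_def)

lemma GL2I: "mmult2 M N = id2 \<Longrightarrow> mmult2 N M = id2 \<Longrightarrow> (M::'a::ring_1 mat2) \<in> GL2"
  unfolding GL2_def by blast

lemma GL2_mult: "A \<in> GL2 \<Longrightarrow> B \<in> GL2 \<Longrightarrow> mmult2 A B \<in> (GL2::'a::ring_1 mat2 set)"
proof -
  assume "A \<in> GL2" "B \<in> GL2"
  then obtain A' B' where A': "mmult2 A A' = id2" "mmult2 A' A = id2"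
    and B': "mmult2 B B' = id2" "mmult2 B' B = id2" unfolding GL2_def by blast
  show ?thesis
  proof (rule GL2I)
    show "mmult2 (mmult2 A B) (mmult2 B' A') = id2"
      by (simp add: mmult2_assoc flip: mmult2_assoc[of B B'] add: A' B')
    show "mmult2 (mmult2 B' A') (mmult2 A B) = id2"
      by (simp add: mmult2_assoc flip: mmult2_assoc[of A' A] add: A' B')
  qed
qed

lemma GL2_swap_rows: "(a,b,c,d) \<in> GL2 \<Longrightarrow> (c,d,a,b) \<in> (GL2::'a::ring_1 mat2 set)"
proof -
  have "(0,1,1,0) \<in> (GL2::'a mat2 set)" by (rule GL2I[of _ "(0,1,1,0)"]) (simp_all add: mmult2_def id2_def)
  moreover have "mmult2 (0,1,1,0) (a,b,c,d) = (c,d,a,b)" by (simp add: mmult2_def)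
  ultimately show "(a,b,c,d) \<in> GL2 \<Longrightarrow> (c,d,a,b) \<in> GL2" using GL2_mult by fastforce
qed

lemma cyc_self: "v \<in> cyc (v::'a::ring_1\<times>'a)"
  unfolding cyc_def by (rule CollectI, rule exI[of _ 1]) (simp add: smult2_def)

lemma smult2_smult2: "smult2 s (smult2 t v) = smult2 (s*t) (v::'a::ring_1\<times>'a)"
  by (simp add: smult2_def mult.assoc)

lemma pact_cyc: "pact (cyc v) G = cyc (vmult v (G::'a::ring_1 mat2))"
proof -
  have cyc_range: "\<And>w. cyc w = range (\<lambda>r. smult2 r w)" by (auto simp: cyc_def)
  show ?thesis unfolding pact_def cyc_range image_image vmult_smult2 ..
qed

lemma pact_pact: "pact (pact X A) B = pact X (mmult2 A (B::'a::ring_1 mat2))"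
  unfolding pact_def image_image vmult_mmult2 ..

lemma pact_involution: "mmult2 G G = id2 \<Longrightarrow> pact (pact X G) G = (X::('a::ring_1\<times>'a) set)"
  by (simp only: pact_pact) (simp add: pact_def)

lemma admissible_vmult: "admissible v \<Longrightarrow> G \<in> GL2 \<Longrightarrow> admissible (vmult v (G::'a::ring_1 mat2))"
proof -
  assume "admissible v" "G \<in> GL2"
  then obtain c d where "(fst v, snd v, c, d) \<in> GL2" unfolding admissible_def by blast
  then have "mmult2 (fst v, snd v, c, d) G \<in> GL2" using GL2_mult \<open>G \<in> GL2\<close> by blast
  then show ?thesis unfolding mmult2_rows admissible_def by (cases "vmult (c,d) G") auto
qed

lemma projline_pact: "X \<in> projline \<Longrightarrow> G \<in> GL2 \<Longrightarrow> pact X G \<in> (projline::('a::ring_1\<times>'a) set set)"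
  unfolding projline_def using admissible_vmult pact_cyc by blast

lemma distant_sym: "distant P Q \<Longrightarrow> distant Q (P::('a::ring_1\<times>'a) set)"
  unfolding distant_def using GL2_swap_rows by blast

lemma distant_projline: "distant P Q \<Longrightarrow> P \<in> projline \<and> Q \<in> (projline::('a::ring_1\<times>'a) set set)"
proof -
  assume "distant P Q"
  then obtain a b c d where "P = cyc (a,b)" "Q = cyc (c,d)" and abcd: "(a,b,c,d) \<in> GL2"
    unfolding distant_def by blast
  moreover have "admissible (a,b)" "admissible (c,d)"
    unfolding admissible_def using abcd GL2_swap_rows[OF abcd] by auto
  ultimately show ?thesis unfolding projline_def by blast
qed

lemma distant_pact: "distant P Q \<Longrightarrow> G \<in> GL2 \<Longrightarrow> distant (pact P G) (pact Q (G::'a::ring_1 mat2))"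
proof -
  assume "distant P Q" "G \<in> GL2"
  then obtain a b c d where abcd: "P = cyc (a,b)" "Q = cyc (c,d)" "(a,b,c,d) \<in> GL2"
    unfolding distant_def by blast
  have "mmult2 (a,b,c,d) G \<in> GL2" using GL2_mult abcd(3) \<open>G \<in> GL2\<close> by blast
  moreover obtain x y where xy: "vmult (a,b) G = (x,y)" by (cases "vmult (a,b) G")
  moreover obtain z w where zw: "vmult (c,d) G = (z,w)" by (cases "vmult (c,d) G")
  ultimately have "(x,y,z,w) \<in> GL2" unfolding mmult2_rows by simp
  then show ?thesis unfolding distant_def abcd pact_cyc xy zw by blast
qed

lemma distant_irrefl: "(0::'a::ring_1) \<noteq> 1 \<Longrightarrow> \<not> distant P (P::('a\<times>'a) set)"
proof
  assume "(0::'a) \<noteq> 1" "distant P P"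
  then obtain a b c d where abcd: "P = cyc (a,b)" "P = cyc (c,d)" "(a,b,c,d) \<in> GL2"
    unfolding distant_def by blast
  have "(c,d) \<in> cyc (a,b)" using cyc_self[of "(c,d)"] abcd(1,2) by simp
  then obtain r where "(c,d) = smult2 r (a,b)" unfolding cyc_def by blast
  then have r: "c = r*a" "d = r*b" by (simp_all add: smult2_def)
  obtain N where "mmult2 (a,b,c,d) N = id2" using abcd(3) unfolding GL2_def by blast
  moreover obtain e f g h where "N = (e,f,g,h)" by (cases N rule: prod_cases4)
  ultimately have "a*f + b*h = 0" "c*f + d*h = 1" by (simp_all add: mmult2_def id2_def)
  have "1 = r * (a*f + b*h)"
    using \<open>c*f + d*h = 1\<close> r by (simp add: distrib_left mult.assoc)
  with \<open>a*f + b*h = 0\<close> \<open>(0::'a) \<noteq> 1\<close> show False by simp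
qed

lemma rtranclp_distant_sym: "distant\<^sup>*\<^sup>* X Y \<Longrightarrow> distant\<^sup>*\<^sup>* Y (X::('a::ring_1\<times>'a) set)"
  by (induction rule: rtranclp_induct)
     (auto intro: converse_rtranclp_into_rtranclp dest: distant_sym)

lemma rtranclp_distant_pact: "distant\<^sup>*\<^sup>* X Y \<Longrightarrow> G \<in> GL2 \<Longrightarrow>
   distant\<^sup>*\<^sup>* (pact X G) (pact Y (G::'a::ring_1 mat2))"
  by (induction rule: rtranclp_induct) (auto intro: rtranclp.rtrancl_into_rtrancl distant_pact)

lemma rtranclp_distant_projline:
  "distant\<^sup>*\<^sup>* X Y \<Longrightarrow> X \<in> projline \<Longrightarrow> Y \<in> (projline::('a::ring_1\<times>'a) set set)"
  by (induction rule: rtranclp_induct) (auto dest: distant_projline)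

lemma disconnected_iff:
  "disconnected TYPE('a::ring_1) \<longleftrightarrow>
     (\<exists>P\<in>(projline :: ('a \<times> 'a) set set). \<exists>Q\<in>projline. \<not> distant\<^sup>*\<^sup>* P Q)"
proof -
  have "(\<lambda>X Y. X \<in> projline \<and> Y \<in> projline \<and> distant X Y) = (distant::('a\<times>'a) set \<Rightarrow> _)"
    using distant_projline by (intro ext) blast
  then show ?thesis unfolding disconnected_def by simp
qed

lemma disconnected_obtain_point:
  fixes X :: "('a::ring_1 \<times> 'a) set"
  assumes "disconnected TYPE('a)"
  obtains p where "p \<in> projline" "\<not> distant\<^sup>*\<^sup>* p X"
proof -
  obtain P Q :: "('a\<times>'a) set" where "P \<in> projline" "Q \<in> projline" "\<not> distant\<^sup>*\<^sup>* P Q"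
    using assms unfolding disconnected_iff by blast
  show thesis
  proof (cases "distant\<^sup>*\<^sup>* P X")
    case True
    with \<open>\<not> distant\<^sup>*\<^sup>* P Q\<close> have "\<not> distant\<^sup>*\<^sup>* Q X"
      by (metis rtranclp_distant_sym rtranclp_trans)
    with \<open>Q \<in> projline\<close> show thesis by (rule that)
  next
    case False
    with \<open>P \<in> projline\<close> show thesis by (rule that)
  qed
qed

lemma distant_cyc_10: "l * l' = 1 \<Longrightarrow> l' * l = 1 \<Longrightarrow> distant (cyc (1,0)) (cyc (k::'a::ring_1, l))"
proof -
  assume "l * l' = 1" "l' * l = 1"
  then have "(1,0,k,l) \<in> (GL2::'a mat2 set)"
    by (intro GL2I[of _ "(1,0,-l'*k,l')"]) (simp_all add: mmult2_def id2_def mult.assoc[symmetric])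
  then show ?thesis unfolding distant_def by blast
qed

lemma distant_cyc_01: "k * k' = 1 \<Longrightarrow> k' * k = 1 \<Longrightarrow> distant (cyc (0,1)) (cyc (k::'a::ring_1, l))"
proof -
  assume "k * k' = 1" "k' * k = 1"
  then have "(0,1,k,l) \<in> (GL2::'a mat2 set)"
    by (intro GL2I[of _ "(-k'*l,k',1,0)"]) (simp_all add: mmult2_def id2_def mult.assoc[symmetric])
  then show ?thesis unfolding distant_def by blast
qed

lemma distant_cyc_10_01: "distant (cyc (1,0)) (cyc (0::'a::ring_1, 1))"
  by (rule distant_cyc_10[of 1 1]) simp_all

lemma cyc_10_projline: "cyc (1,0) \<in> (projline::('a::ring_1\<times>'a) set set)"
  using distant_cyc_10_01 distant_projline by blast

lemma std_chain_connected:
  assumes K: "subfield K" and Y: "Y \<in> std_chain K"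
  shows "distant\<^sup>*\<^sup>* (cyc (1,0)) (Y::('a::ring_1\<times>'a) set)"
proof -
  obtain k l where kl: "Y = cyc (k,l)" "k \<in> K" "l \<in> K" "(k,l) \<noteq> (0,0)"
    using Y unfolding std_chain_def by blast
  show ?thesis
  proof (cases "k = 0")
    case False
    then obtain k' where "k * k' = 1" "k' * k = 1" using K kl unfolding subfield_def by blast
    then have "distant (cyc (0,1)) Y" unfolding kl by (rule distant_cyc_01)
    with distant_cyc_10_01 show ?thesis by (meson converse_rtranclp_into_rtranclp r_into_rtranclp)
  next
    case True
    then obtain l' where "l * l' = 1" "l' * l = 1" using K kl unfolding subfield_def by auto
    then have "distant (cyc (1,0)) Y" unfolding kl by (rule distant_cyc_10)
    then show ?thesis by blast
  qed
qed

lemma chains_connected: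
  assumes "subfield K" "C \<in> chains K" "X \<in> C" "Y \<in> C"
  shows "distant\<^sup>*\<^sup>* X (Y::('a::ring_1\<times>'a) set)"
proof -
  obtain G where G: "G \<in> GL2" "C = (\<lambda>P. pact P G) ` std_chain K"
    using assms(2) unfolding chains_def by blast
  have "distant\<^sup>*\<^sup>* (pact (cyc (1,0)) G) Z" if "Z \<in> C" for Z
    using that G std_chain_connected[OF assms(1)] rtranclp_distant_pact by blast
  then show ?thesis using assms(3,4) by (metis rtranclp_distant_sym rtranclp_trans)
qed

lemma rtranclp_distant_pact_involution:
  assumes "mmult2 G G = id2" "distant\<^sup>*\<^sup>* p (pact p G)"
  shows "distant\<^sup>*\<^sup>* p (pact X G) \<longleftrightarrow> distant\<^sup>*\<^sup>* p (X::('a::ring_1\<times>'a) set)"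
proof -
  have "G \<in> GL2" using GL2I[OF assms(1) assms(1)] .
  have closed: "distant\<^sup>*\<^sup>* p (pact Y G)" if "distant\<^sup>*\<^sup>* p Y" for Y
    using assms(2) rtranclp_distant_pact[OF that \<open>G \<in> GL2\<close>] by (rule rtranclp_trans)
  show ?thesis using closed[of "pact X G"] closed[of X] pact_involution[OF assms(1)] by auto
qed

lemma chain_automorphism_component_swap:
  fixes G :: "'a::ring_1 mat2"
  assumes K: "subfield K" and G: "mmult2 G G = id2" "distant\<^sup>*\<^sup>* p (pact p G)"
  defines "\<gamma> \<equiv> \<lambda>X. if distant\<^sup>*\<^sup>* p X then pact X G else X"
  shows "chain_automorphism K \<gamma>"
proof -
  have "G \<in> GL2" using GL2I[OF G(1) G(1)] .
  have \<gamma>\<gamma>: "\<gamma> (\<gamma> X) = X" for X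
    unfolding \<gamma>_def using rtranclp_distant_pact_involution[OF G] pact_involution[OF G(1)] by auto
  have "\<gamma> X \<in> projline" if "X \<in> projline" for X
    unfolding \<gamma>_def using that projline_pact[OF _ \<open>G \<in> GL2\<close>] by auto
  then have "bij_betw \<gamma> projline projline"
    using \<gamma>\<gamma> by (intro bij_betw_byWitness[where f' = \<gamma>]) auto
  have chain_image: "\<gamma> ` C \<in> chains K" if C: "C \<in> chains K" for C
  proof (cases "\<exists>Y\<in>C. distant\<^sup>*\<^sup>* p Y")
    case True
    then have "\<forall>Y\<in>C. distant\<^sup>*\<^sup>* p Y" using chains_connected[OF K C] rtranclp_trans by metis
    then have "\<gamma> ` C = (\<lambda>P. pact P G) ` C" unfolding \<gamma>_def by simp
    moreover obtain H where "H \<in> GL2" "C = (\<lambda>P. pact P H) ` std_chain K"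
      using C unfolding chains_def by blast
    ultimately have "\<gamma> ` C = (\<lambda>P. pact P (mmult2 H G)) ` std_chain K"
      by (simp add: image_image pact_pact)
    then show ?thesis unfolding chains_def using GL2_mult[OF \<open>H \<in> GL2\<close> \<open>G \<in> GL2\<close>] by blast
  next
    case False
    then have "\<gamma> ` C = C" unfolding \<gamma>_def by simp
    then show ?thesis using C by simp
  qed
  have "(\<lambda>C. \<gamma> ` C) ` chains K = chains K"
  proof
    show "(\<lambda>C. \<gamma> ` C) ` chains K \<subseteq> chains K" using chain_image by blast
    show "chains K \<subseteq> (\<lambda>C. \<gamma> ` C) ` chains K"
    proof
      fix C assume "C \<in> chains K"
      moreover have "\<gamma> ` \<gamma> ` C = C" by (simp add: image_image \<gamma>\<gamma>)
      ultimately show "C \<in> (\<lambda>C. \<gamma> ` C) ` chains K" using chain_image by (metis imageI)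
    qed
  qed
  with \<open>bij_betw \<gamma> projline projline\<close> show ?thesis unfolding chain_automorphism_def by blast
qed

text \<open>If (a,b) is the first row of M, then inv M * (0,1;1,0) * M is an involution mapping
R(a,b) to R(c,d), where (c,d) is the second row of M.\<close>

lemma involution_moving_point:
  assumes "p \<in> projline"
  obtains G :: "'a::ring_1 mat2" where "mmult2 G G = id2" "distant p (pact p G)"
proof -
  obtain a b where p: "p = cyc (a,b)" and "admissible (a,b)"
    using assms unfolding projline_def by auto
  then obtain c d where M: "(a,b,c,d) \<in> GL2" unfolding admissible_def by auto
  then obtain N where N: "mmult2 (a,b,c,d) N = id2" "mmult2 N (a,b,c,d) = id2"
    unfolding GL2_def by blast
  define H :: "'a mat2" where "H = (0,1,1,0)"
  have HH: "mmult2 H H = id2" unfolding H_def by (simp add: mmult2_def id2_def)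
  define G where "G = mmult2 N (mmult2 H (a,b,c,d))"
  have "mmult2 G G = mmult2 N (mmult2 H (mmult2 (mmult2 (a,b,c,d) N) (mmult2 H (a,b,c,d))))"
    unfolding G_def by (simp only: mmult2_assoc)
  also have "\<dots> = mmult2 N (mmult2 (mmult2 H H) (a,b,c,d))"
    unfolding N(1) by (simp only: mmult2_id2 mmult2_assoc)
  also have "\<dots> = id2" unfolding HH by (simp add: N(2))
  finally have GG: "mmult2 G G = id2" .
  have "vmult (a,b) N = vmult (vmult (1,0) (a,b,c,d)) N" by (simp add: vmult_def)
  also have "\<dots> = (1,0)" by (simp add: vmult_mmult2 N(1))
  finally have "vmult (a,b) G = (c,d)"
    unfolding G_def H_def by (simp flip: vmult_mmult2) (simp add: vmult_def)
  then have "distant p (pact p G)" unfolding p pact_cyc distant_def using M by auto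
  with GG show thesis by (rule that)
qed

lemma semilinear_bij_fixing_frame:
  assumes "semilinear_bij f"
    and "f ` cyc (1,0) \<subseteq> cyc (1,0)" "f ` cyc (0,1) \<subseteq> cyc (0,1)"
    and "\<And>x. f ` cyc (1,x) \<subseteq> cyc (1,x)"
  shows "\<exists>u. f = smult2 (u::'a::ring_1)"
proof -
  obtain z where z: "ring_automorphism z" and f_smult2: "\<And>r v. f (smult2 r v) = smult2 (z r) (f v)"
    and f_vadd: "\<And>v w. f (vadd v w) = vadd (f v) (f w)"
    using assms(1) unfolding semilinear_bij_def by blast
  have "f (1,0) \<in> cyc (1,0)" "f (0,1) \<in> cyc (0,1)" using assms(2,3) cyc_self by blast+
  then obtain u w where u: "f (1,0) = (u,0)" and w: "f (0,1) = (0,w)"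
    unfolding cyc_def smult2_def by auto
  have f_basis: "f (x,y) = (z x * u, z y * w)" for x y
  proof -
    have "f (vadd (smult2 x (1,0)) (smult2 y (0,1))) = (z x * u, z y * w)"
      by (simp only: f_vadd f_smult2 u w) (simp add: vadd_def smult2_def)
    moreover have "vadd (smult2 x (1,0)) (smult2 y (0,1)) = (x,y)" by (simp add: vadd_def smult2_def)
    ultimately show ?thesis by simp
  qed
  have zw: "z x * w = u * x" for x
  proof -
    have "f (1,x) \<in> cyc (1,x)" using assms(4) cyc_self by blast
    moreover have "z 1 = 1" using z unfolding ring_automorphism_def by blast
    ultimately show ?thesis unfolding f_basis cyc_def smult2_def by auto
  qed
  have "z 1 = 1" using z unfolding ring_automorphism_def by blast
  then have "w = u" using zw[of 1] by simp
  then have "f = smult2 u" using zw by (auto simp: fun_eq_iff f_basis smult2_def)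
  then show ?thesis ..
qed

lemma image_surj_smult2_cyc:
  assumes "surj (smult2 (u::'a::ring_1))"
  shows "smult2 u ` cyc v = cyc v"
proof -
  obtain y where "smult2 u y = (1,0)" using assms by (metis surjD)
  then have "u * fst y = 1" by (simp add: smult2_def)
  then have "smult2 s v = smult2 u (smult2 (fst y * s) v)" for s
    by (simp add: smult2_smult2 mult.assoc[symmetric])
  then have "cyc v \<subseteq> smult2 u ` cyc v" unfolding cyc_def by blast
  moreover have "smult2 u ` cyc v \<subseteq> cyc v" unfolding cyc_def by (auto simp: smult2_smult2)
  ultimately show ?thesis by blast
qed

lemma not_induced_if_fixes_component_of_cyc_10:
  fixes \<gamma> :: "('a::ring_1 \<times> 'a) set \<Rightarrow> ('a \<times> 'a) set"
  assumes fixes_component: "\<And>Y. distant\<^sup>*\<^sup>* (cyc (1,0)) Y \<Longrightarrow> \<gamma> Y = Y"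
    and moves: "p \<in> projline" "\<gamma> p \<noteq> p"
  shows "\<not> (\<exists>f. semilinear_bij f \<and> induced_by \<gamma> f)"
proof
  assume "\<exists>f. semilinear_bij f \<and> induced_by \<gamma> f"
  then obtain f where f: "semilinear_bij f" "\<And>P. P \<in> projline \<Longrightarrow> \<gamma> P = f ` P"
    unfolding induced_by_def by auto
  have fixed: "f ` Y = Y" if "distant\<^sup>*\<^sup>* (cyc (1,0)) Y" for Y
    using f(2)[OF rtranclp_distant_projline[OF that cyc_10_projline]] fixes_component[OF that] by simp
  have "distant\<^sup>*\<^sup>* (cyc (1,0)) (cyc (1,x))" for x
    using distant_cyc_10_01 distant_cyc_01[of 1 1 x, simplified]
    by (meson rtranclp.rtrancl_into_rtrancl r_into_rtranclp)
  then obtain u where "f = smult2 u"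
    using semilinear_bij_fixing_frame[OF f(1)] fixed distant_cyc_10_01 by blast
  moreover have "surj f" using f(1) unfolding semilinear_bij_def bij_def by blast
  moreover obtain q where "p = cyc q" using moves(1) unfolding projline_def by blast
  ultimately have "f ` p = p" using image_surj_smult2_cyc by blast
  with f(2)[OF moves(1)] moves(2) show False by simp
qed

theorem mainTheorem6:
  fixes K :: "'a::ring_1 set"
  assumes "subfield K"
    and "disconnected TYPE('a)"
  shows "\<exists>\<gamma>. chain_automorphism K \<gamma> \<and> \<not> (\<exists>f. semilinear_bij f \<and> induced_by \<gamma> f)"
proof -
  obtain p where p: "p \<in> projline" "\<not> distant\<^sup>*\<^sup>* p (cyc (1::'a, 0))"
    using disconnected_obtain_point[OF assms(2)] .
  obtain G :: "'a mat2" where G: "mmult2 G G = id2" "distant p (pact p G)"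
    using involution_moving_point[OF p(1)] .
  define \<gamma> where "\<gamma> X = (if distant\<^sup>*\<^sup>* p X then pact X G else X)" for X
  have "chain_automorphism K \<gamma>"
    unfolding \<gamma>_def using chain_automorphism_component_swap[OF assms(1) G(1)] G(2) by blast
  moreover have "\<not> (\<exists>f. semilinear_bij f \<and> induced_by \<gamma> f)"
  proof (rule not_induced_if_fixes_component_of_cyc_10[OF _ p(1)])
    show "\<gamma> Y = Y" if "distant\<^sup>*\<^sup>* (cyc (1,0)) Y" for Y
      using that p(2) unfolding \<gamma>_def by (metis rtranclp_distant_sym rtranclp_trans)
    have "(0::'a) \<noteq> 1" using assms(1) unfolding subfield_def by blast
    then have "pact p G \<noteq> p" using G(2) distant_irrefl by metis
    then show "\<gamma> p \<noteq> p" unfolding \<gamma>_def by simp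
  qed
  ultimately show ?thesis by blast
qed

end
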